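(* Suppose the scheme satisfies the tensorial $k$-$k$-order orthogonality condition and $u\in H^{k+2}(\Omega)$. Then for every $K=K_{i,j}\in\mathcal T_h$, $$\int_{x_{i-1}}^{x_i}R^S_{x,K}\,dx=\int_{x_{i-1}}^{x_i}R^{S,1}_{x,K}\,dx=0,\qquad \int_{y_{j-1}}^{y_j}R^S_{y,K}\,dy=\int_{y_{j-1}}^{y_j}R^{S,1}_{y,K}\,dy=0.$$
   Context: Setting: $\Omega=(0,1)^2$, $k\ge1$; mesh $0=x_0<\dots<x_{N_x}=1$, $0=y_0<\dots<y_{N_y}=1$, $K_{i,j}=[x_{i-1},x_i]\times[y_{j-1},y_j]$, $F_K:[-1,1]^2\to K$ affine with $x=\frac{x_i-x_{i-1}}{2}\hat x+\frac{x_{i-1}+x_i}{2}$, $y=\frac{y_j-y_{j-1}}{2}\hat y+\frac{y_{j-1}+y_j}{2}$. Dual parameters $-1<\alpha^x_1<\dots<\alpha^x_k<1$, $-1<\alpha^y_1<\dots<\alpha^y_k<1$, interpolation parameters $-1=a^x_0<\dots<a^x_k=1$, $-1=a^y_0<\dots<a^y_k=1$ with $a^x_{s-1}<\alpha^x_s<a^x_s$, $a^y_{s-1}<\alpha^y_s<a^y_s$; $\alpha^x_0=\alpha^y_0=-1$, $\alpha^x_{k+1}=\alpha^y_{k+1}=1$. Orthogonality condition: for $k-1\le r\le 2k-2$, the $x$-direction parameters satisfy the $k$-$r$-order orthogonality condition if $\int_{-1}^1 g(\hat x)(w(\hat x)-(\hat\Pi_xw)(\hat x))d\hat x=0$ for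 all $g\in P^r([-1,1])$, $w\in P^1([-1,1])$, where $(\hat\Pi_xw)(\hat x)=w(a^x_s)$ for $\hat x\in(\alpha^x_s,\alpha^x_{s+1})$; analogously in $y$. The tensorial $k$-$r$-order condition means both directions satisfy it. M-decomposition: $L_n$ Legendre polynomials; $\hat M_0=1$, $\hat M_1=\hat x$, $\hat M_n(\hat x)=\int_{-1}^{\hat x}L_{n-1}$ ($n\ge2$); $M^x_s(x)=\hat M_s(\hat x)$, $M^y_t(y)=\hat M_t(\hat y)$ on $K$. $\lambda_0(g)=\frac{g(1)+g(-1)}2$, $\lambda_1(g)=\frac{g(1)-g(-1)}2$, $\lambda_n(g)=\frac{2n-1}{2}\int_{-1}^1g'L_{n-1}$ ($n\ge2$); M-coefficients $b_{s,t}=b^K_{s,t}=\lambda^{(\hat x)}_s\lambda^{(\hat y)}_t(u\circ F_K)$. AMD-Super corrections: on each $K$, for $t\in\{0,1\}$ the numbers $b^*_{s,t}$ ($2\le s\le k$) solve $\sum_{s=2}^k b^*_{s,t}L_{s-1}(\alpha^x_m)+b_{k+1,t}L_k(\alpha^x_m)=0$, $m=1,\dots,k-1$; for $s\in\{0,1\}$ the numbers $b^*_{s,t}$ ($2\le t\le k$) solve $\sum_{t=2}^k b^*_{s,t}L_{t-1}(\alpha^y_m)+b_{s,k+1}L_k(\alpha^y_m)=0$, $m=1,\dots,k-1$ (systems assumed uniquely solvable). $R^S_{x,K}=\sum_{s=2}^kb^*_{s,0}M^x_s+b_{k+1,0}M^x_{k+1}$, $R^{S,1}_{x,K}=\sum_{s=2}^kb^*_{s,1}M^x_s+b_{k+1,1}M^x_{k+1}$,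 $R^S_{y,K}=\sum_{t=2}^kb^*_{0,t}M^y_t+b_{0,k+1}M^y_{k+1}$, $R^{S,1}_{y,K}=\sum_{t=2}^kb^*_{1,t}M^y_t+b_{1,k+1}M^y_{k+1}$. *)

theory Defs
  imports "HOL-Analysis.Analysis" "HOL-Computational_Algebra.Polynomial"
begin

fun legendre :: "nat \<Rightarrow> real \<Rightarrow> real" where
  "legendre 0 x = 1"
| "legendre (Suc 0) x = x"
| "legendre (Suc (Suc n)) x =
     ((2 * real n + 3) * x * legendre (Suc n) x - (real n + 1) * legendre n x) / (real n + 2)"

definition Mhat :: "nat \<Rightarrow> real \<Rightarrow> real" where
  "Mhat n xh = (if n = 0 then 1 else if n = 1 then xh
                else integral {-1..xh} (legendre (n - 1)))"

definition lamM :: "nat \<Rightarrow> (real \<Rightarrow> real) \<Rightarrow> real" where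
  "lamM n g = (if n = 0 then (g 1 + g (-1)) / 2
               else if n = 1 then (g 1 - g (-1)) / 2
               else (2 * real n - 1) / 2 * integral {-1..1} (\<lambda>t. deriv g t * legendre (n - 1) t))"

definition affmap :: "real \<Rightarrow> real \<Rightarrow> real \<Rightarrow> real" where
  "affmap l r xh = (r - l) / 2 * xh + (l + r) / 2"

definition refcoord :: "real \<Rightarrow> real \<Rightarrow> real \<Rightarrow> real" where
  "refcoord l r x = (2 * x - (l + r)) / (r - l)"

definition mesh :: "nat \<Rightarrow> (nat \<Rightarrow> real) \<Rightarrow> bool" where
  "mesh N xs \<longleftrightarrow> 0 < N \<and> xs 0 = 0 \<and> xs N = 1 \<and> (\<forall>i<N. xs i < xs (Suc i))"

text \<open>Dual parameters alpha_1..alpha_k (with alpha_0 = -1, alpha_(k+1) = 1) and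
  interpolation parameters a_0..a_k, interlacing.\<close>
definition dir_params :: "nat \<Rightarrow> (nat \<Rightarrow> real) \<Rightarrow> (nat \<Rightarrow> real) \<Rightarrow> bool" where
  "dir_params k a alpha \<longleftrightarrow>
     a 0 = -1 \<and> a k = 1 \<and> alpha 0 = -1 \<and> alpha (k + 1) = 1 \<and>
     (\<forall>s<k. a s < a (Suc s)) \<and> (\<forall>s\<le>k. alpha s < alpha (Suc s)) \<and>
     (\<forall>s\<in>{1..k}. a (s - 1) < alpha s \<and> alpha s < a s)"

text \<open>Interpolation (Pi w)(x) = w(a_s) for x in (alpha_s, alpha_(s+1)), s = 0..k
  (value at the finitely many points alpha_s irrelevant; set to 0).\<close>
definition interpPi :: "nat \<Rightarrow> (nat \<Rightarrow> real) \<Rightarrow> (nat \<Rightarrow> real) \<Rightarrow> (real \<Rightarrow> real) \<Rightarrow> real \<Rightarrow> real" where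
  "interpPi k a alpha w x =
     (if \<exists>s\<le>k. alpha s < x \<and> x < alpha (Suc s)
      then w (a (THE s. s \<le> k \<and> alpha s < x \<and> x < alpha (Suc s))) else 0)"

definition orth_cond :: "nat \<Rightarrow> nat \<Rightarrow> (nat \<Rightarrow> real) \<Rightarrow> (nat \<Rightarrow> real) \<Rightarrow> bool" where
  "orth_cond k r a alpha \<longleftrightarrow>
     k - 1 \<le> r \<and> r \<le> 2 * k - 2 \<and>
     (\<forall>g w :: real poly. degree g \<le> r \<longrightarrow> degree w \<le> 1 \<longrightarrow>
        integral {-1..1} (\<lambda>x. poly g x * (poly w x - interpPi k a alpha (poly w) x)) = 0)"

definition Mcoef :: "(real \<Rightarrow> real \<Rightarrow> real) \<Rightarrow> (nat \<Rightarrow> real) \<Rightarrow> (nat \<Rightarrow> real) \<Rightarrow> nat \<Rightarrow> nat \<Rightarrow> nat \<Rightarrow> nat \<Rightarrow> real" where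
  "Mcoef u xs ys i j s t =
     lamM s (\<lambda>xh. lamM t (\<lambda>yh. u (affmap (xs (i - 1)) (xs i) xh) (affmap (ys (j - 1)) (ys j) yh)))"

definition corr_sys :: "nat \<Rightarrow> (nat \<Rightarrow> real) \<Rightarrow> real \<Rightarrow> (nat \<Rightarrow> real) \<Rightarrow> bool" where
  "corr_sys k alpha c bs \<longleftrightarrow>
     (\<forall>s. s \<notin> {2..k} \<longrightarrow> bs s = 0) \<and>
     (\<forall>m\<in>{1..k-1}. (\<Sum>s=2..k. bs s * legendre (s - 1) (alpha m)) + c * legendre k (alpha m) = 0)"

definition corr_sol :: "nat \<Rightarrow> (nat \<Rightarrow> real) \<Rightarrow> real \<Rightarrow> nat \<Rightarrow> real" where
  "corr_sol k alpha c = (THE bs. corr_sys k alpha c bs)"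

definition corr_fun :: "nat \<Rightarrow> (nat \<Rightarrow> real) \<Rightarrow> real \<Rightarrow> real \<Rightarrow> real \<Rightarrow> real \<Rightarrow> real" where
  "corr_fun k alpha c l r z =
     (\<Sum>s=2..k. corr_sol k alpha c s * Mhat s (refcoord l r z)) + c * Mhat (k + 1) (refcoord l r z)"

text \<open>R^S_{x,K} (t=0) and R^{S,1}_{x,K} (t=1) as functions of x on [x_{i-1},x_i].\<close>
definition RSx :: "(real \<Rightarrow> real \<Rightarrow> real) \<Rightarrow> (nat \<Rightarrow> real) \<Rightarrow> (nat \<Rightarrow> real) \<Rightarrow> nat \<Rightarrow> (nat \<Rightarrow> real)
                   \<Rightarrow> nat \<Rightarrow> nat \<Rightarrow> nat \<Rightarrow> real \<Rightarrow> real" where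
  "RSx u xs ys k alphax i j t x = corr_fun k alphax (Mcoef u xs ys i j (k + 1) t) (xs (i - 1)) (xs i) x"

text \<open>R^S_{y,K} (s=0) and R^{S,1}_{y,K} (s=1) as functions of y on [y_{j-1},y_j].\<close>
definition RSy :: "(real \<Rightarrow> real \<Rightarrow> real) \<Rightarrow> (nat \<Rightarrow> real) \<Rightarrow> (nat \<Rightarrow> real) \<Rightarrow> nat \<Rightarrow> (nat \<Rightarrow> real)
                   \<Rightarrow> nat \<Rightarrow> nat \<Rightarrow> nat \<Rightarrow> real \<Rightarrow> real" where
  "RSy u xs ys k alphay i j s y = corr_fun k alphay (Mcoef u xs ys i j s (k + 1)) (ys (j - 1)) (ys j) y"

end

(*
  Tested against w(x) = x and integrated by parts, the k-k orthogonality condition says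
  that the quadrature rule  int_{-1}^{1} G = sum_{s=1}^{k} (a_s - a_{s-1}) G(alpha_s)  is
  exact for polynomials G of degree at most k + 1.

  On the reference element the derivative of a correction  sum_s b*_s M_s + c M_{k+1}  is
  P = sum_s b*_s L_{s-1} + c L_k. It has mean zero, and the correction system makes it vanish
  at alpha_1, ..., alpha_{k-1}. The quadrature rule applied to P, whose last weight is
  positive, gives P(alpha_k) = 0; applied to x P it then gives 0 = int x P = 2/3 b*_2.
  As M_n = (L_n - L_{n-2}) / (2n - 1) has mean zero for n >= 3, so has the correction.
*)
theory Submission
  imports Defs
begin

fun legendre_poly :: "nat \<Rightarrow> real poly" where
  "legendre_poly 0 = 1"
| "legendre_poly (Suc 0) = [:0, 1:]"
| "legendre_poly (Suc (Suc n)) = smult (1 / (real n + 2))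
     (smult (2 * real n + 3) ([:0, 1:] * legendre_poly (Suc n))
      - smult (real n + 1) (legendre_poly n))"

lemma poly_legendre_poly [simp]: "poly (legendre_poly n) x = legendre n x"
  by (induction n rule: legendre_poly.induct) (auto simp: field_simps)

lemma degree_legendre_poly: "degree (legendre_poly n) \<le> n"
proof (induction n rule: legendre_poly.induct)
  case (3 n)
  have "degree ([:0, 1:] * legendre_poly (Suc n)) \<le> Suc (Suc n)"
    using degree_mult_le[of "[:0, 1:]" "legendre_poly (Suc n)"] 3(1) by simp
  then show ?case
    using 3(2) by (auto intro!: degree_diff_le order.trans[OF degree_smult_le])
qed auto

lemma legendre_1: "legendre n 1 = 1"
  by (induction n rule: legendre_poly.induct) (auto simp: field_simps)

lemma legendre_neg_1: "legendre n (-1) = (-1) ^ n"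
  by (induction n rule: legendre_poly.induct) (auto simp: field_simps)

lemma legendre_recurrence:
  "(real n + 2) * legendre (Suc (Suc n)) x
     = (2 * real n + 3) * x * legendre (Suc n) x - (real n + 1) * legendre n x"
  by (simp add: field_simps)

declare legendre.simps(3) [simp del] legendre_poly.simps(3) [simp del]

lemma pderiv_legendre_poly_Suc_Suc:
  "(real n + 2) * poly (pderiv (legendre_poly (Suc (Suc n)))) x =
     (2 * real n + 3) * (legendre (Suc n) x + x * poly (pderiv (legendre_poly (Suc n))) x)
     - (real n + 1) * poly (pderiv (legendre_poly n)) x"
  by (simp add: legendre_poly.simps(3) pderiv_mult pderiv_pCons pderiv_smult pderiv_diff
      field_simps)

lemma pderiv_legendre_poly_Suc_Suc_eq:
  assumes "x * poly (pderiv (legendre_poly (Suc n))) x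
             = poly (pderiv (legendre_poly n)) x + (real n + 1) * legendre (Suc n) x"
  shows "poly (pderiv (legendre_poly (Suc (Suc n)))) x
           = poly (pderiv (legendre_poly n)) x + (2 * real n + 3) * legendre (Suc n) x"
proof -
  let ?D = "\<lambda>n. poly (pderiv (legendre_poly n)) x"
  have "(real n + 2) * ?D (Suc (Suc n))
          = (2 * real n + 3) * (legendre (Suc n) x + (?D n + (real n + 1) * legendre (Suc n) x))
            - (real n + 1) * ?D n"
    using pderiv_legendre_poly_Suc_Suc[of n x] unfolding assms .
  also have "\<dots> = (real n + 2) * (?D n + (2 * real n + 3) * legendre (Suc n) x)"
    by (simp add: algebra_simps)
  finally show ?thesis
    by simp
qed

lemma x_pderiv_legendre_poly:
  "x * poly (pderiv (legendre_poly (Suc n))) x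
     = poly (pderiv (legendre_poly n)) x + (real n + 1) * legendre (Suc n) x"
proof (induction n rule: legendre_poly.induct)
  case 1
  then show ?case by (simp add: pderiv_pCons)
next
  case 2
  then show ?case
    by (simp add: legendre.simps(3) legendre_poly.simps(3) pderiv_pCons pderiv_smult pderiv_mult
        pderiv_diff field_simps)
next
  case (3 m)
  let ?D = "\<lambda>n. poly (pderiv (legendre_poly n)) x"
  have "x * ?D (Suc (Suc (Suc m)))
          = x * ?D (Suc m) + (2 * real m + 5) * x * legendre (Suc (Suc m)) x"
    using pderiv_legendre_poly_Suc_Suc_eq[OF "3.IH"(1)] by (simp add: algebra_simps)
  also have "\<dots> = ?D m + (real m + 1) * legendre (Suc m) x
                    + (2 * real m + 5) * x * legendre (Suc (Suc m)) x"
    unfolding "3.IH"(2) ..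
  also have "\<dots> = ?D (Suc (Suc m)) + (real (Suc (Suc m)) + 1) * legendre (Suc (Suc (Suc m))) x"
    using pderiv_legendre_poly_Suc_Suc_eq[OF "3.IH"(2)] legendre_recurrence[of "Suc m" x]
    by (simp add: algebra_simps)
  finally show ?case .
qed

lemma pderiv_legendre_poly_Suc_Suc_diff:
  "poly (pderiv (legendre_poly (Suc (Suc n)))) x - poly (pderiv (legendre_poly n)) x
     = (2 * real n + 3) * legendre (Suc n) x"
  using pderiv_legendre_poly_Suc_Suc_eq[OF x_pderiv_legendre_poly] by simp

lemma has_integral_poly_pderiv:
  fixes p :: "real poly"
  assumes "a \<le> b"
  shows "(poly (pderiv p) has_integral (poly p b - poly p a)) {a..b}"
  by (rule fundamental_theorem_of_calculus[OF assms])
     (metis has_real_derivative_iff_has_vector_derivative has_field_derivative_at_within poly_DERIV)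

lemma has_integral_legendre_Suc:
  assumes "a \<le> b"
  shows "(legendre (Suc n) has_integral
           ((legendre (Suc (Suc n)) b - legendre n b) - (legendre (Suc (Suc n)) a - legendre n a))
             / (2 * real n + 3)) {a..b}"
proof -
  define P where "P = smult (1 / (2 * real n + 3)) (legendre_poly (Suc (Suc n)) - legendre_poly n)"
  have "poly (pderiv P) = legendre (Suc n)"
    using pderiv_legendre_poly_Suc_Suc_diff by (auto simp: P_def pderiv_smult pderiv_diff)
  then show ?thesis
    using has_integral_poly_pderiv[OF assms, of P] by (simp add: P_def diff_divide_distrib)
qed

lemma legendre_has_integral_0:
  assumes "1 \<le> n"
  shows "(legendre n has_integral 0) {-1..1}"
proof -
  obtain m where "n = Suc m" using assms by (cases n) auto
  then show ?thesis
    using has_integral_legendre_Suc[of "-1" 1 m] by (simp add: legendre_1 legendre_neg_1)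
qed

lemma x_legendre_has_integral_0:
  assumes "2 \<le> n"
  shows "((\<lambda>x. x * legendre n x) has_integral 0) {-1..1}"
proof -
  obtain m where n: "n = Suc (Suc m)" using assms by (metis add_2_eq_Suc le_Suc_ex)
  have "x * legendre n x = ((real m + 3) * legendre (Suc n) x + (real m + 2) * legendre (Suc m) x)
          / (2 * real m + 5)" for x
    using legendre_recurrence[of "Suc m" x] unfolding n by (simp add: field_simps)
  moreover have "((\<lambda>x. ((real m + 3) * legendre (Suc n) x + (real m + 2) * legendre (Suc m) x)
                           / (2 * real m + 5))
                   has_integral ((real m + 3) * 0 + (real m + 2) * 0) / (2 * real m + 5)) {-1..1}"
    by (intro has_integral_divide has_integral_add has_integral_mult_right legendre_has_integral_0)
      simp_all
  ultimately show ?thesis by simp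
qed

lemma x_legendre_1_has_integral: "((\<lambda>x. x * legendre 1 x) has_integral 2 / 3) {-1..1}"
proof -
  have "poly (pderiv [:0, 0, 0, 1 / 3:]) = (\<lambda>x. x * legendre 1 x)"
    by (auto simp: pderiv_pCons power2_eq_square)
  then show ?thesis
    using has_integral_poly_pderiv[of "-1" 1 "[:0, 0, 0, 1 / 3:]"] by simp
qed

lemma Mhat_Suc_Suc:
  assumes "-1 \<le> t"
  shows "Mhat (Suc (Suc n)) t = (legendre (Suc (Suc n)) t - legendre n t) / (2 * real n + 3)"
proof -
  have "legendre (Suc (Suc n)) (-1) - legendre n (-1) = 0"
    by (simp add: legendre_neg_1)
  then show ?thesis
    using integral_unique[OF has_integral_legendre_Suc[OF assms, of n]] by (simp add: Mhat_def)
qed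

lemma Mhat_has_integral_0:
  assumes "3 \<le> n"
  shows "(Mhat n has_integral 0) {-1..1}"
proof -
  define m where "m = n - 2"
  have n: "n = Suc (Suc m)" and m: "1 \<le> m"
    using assms by (auto simp: m_def)
  have "((\<lambda>t. (legendre (Suc (Suc m)) t - legendre m t) / (2 * real m + 3))
          has_integral (0 - 0) / (2 * real m + 3)) {-1..1}"
    by (intro has_integral_divide has_integral_diff legendre_has_integral_0) (use m in auto)
  moreover have "Mhat n t = (legendre (Suc (Suc m)) t - legendre m t) / (2 * real m + 3)"
    if "t \<in> {-1..1}" for t
    using that unfolding n by (simp add: Mhat_Suc_Suc)
  ultimately show ?thesis
    using has_integral_cong[of "{-1..1}" "Mhat n"] by simp
qed

lemma dir_params_alpha_mono:
  assumes "dir_params k a alpha" and "s \<le> t" and "t \<le> k + 1"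
  shows "alpha s \<le> alpha t"
  using assms(2,3)
proof (induction t rule: dec_induct)
  case (step n)
  then have "alpha n < alpha (Suc n)"
    using assms(1) by (simp add: dir_params_def)
  with step show ?case by simp
qed simp

lemma interpPi_eq:
  assumes "dir_params k a alpha" and "m \<le> k" and "alpha m < x" and "x < alpha (Suc m)"
  shows "interpPi k a alpha w x = w (a m)"
proof -
  have unique: "s = m" if s: "s \<le> k" "alpha s < x" "x < alpha (Suc s)" for s
  proof (rule ccontr)
    assume "s \<noteq> m"
    then consider "Suc m \<le> s" | "Suc s \<le> m" by linarith
    then show False
    proof cases
      case 1
      then have "alpha (Suc m) \<le> alpha s"
        using dir_params_alpha_mono[OF assms(1)] s(1) by simp
      with s(2) assms(4) show False by simp
    next
      case 2
      then have "alpha (Suc s) \<le> alpha m"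
        using dir_params_alpha_mono[OF assms(1)] assms(2) by simp
      with s(3) assms(3) show False by simp
    qed
  qed
  have "(THE s. s \<le> k \<and> alpha s < x \<and> x < alpha (Suc s)) = m"
    using assms(2-4) unique by blast
  moreover have "\<exists>s\<le>k. alpha s < x \<and> x < alpha (Suc s)"
    using assms(2-4) by blast
  ultimately show ?thesis
    by (simp add: interpPi_def)
qed

lemma pderiv_mult_interpPi_has_integral:
  fixes G :: "real poly"
  assumes "dir_params k a alpha" and "m \<le> k + 1"
  shows "((\<lambda>x. poly (pderiv G) x * interpPi k a alpha w x) has_integral
           (\<Sum>s<m. w (a s) * (poly G (alpha (Suc s)) - poly G (alpha s)))) {alpha 0..alpha m}"
  using assms(2)
proof (induction m)
  case 0
  then show ?case using has_integral_refl(1)[of _ "alpha 0"] by simp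
next
  case (Suc m)
  have le: "alpha 0 \<le> alpha m" "alpha m \<le> alpha (Suc m)"
    using dir_params_alpha_mono[OF assms(1)] Suc.prems by auto
  have "((\<lambda>x. poly (pderiv G) x * interpPi k a alpha w x) has_integral
          w (a m) * (poly G (alpha (Suc m)) - poly G (alpha m))) {alpha m..alpha (Suc m)}"
  proof (rule has_integral_spike_finite)
    show "((\<lambda>x. w (a m) * poly (pderiv G) x) has_integral
            w (a m) * (poly G (alpha (Suc m)) - poly G (alpha m))) {alpha m..alpha (Suc m)}"
      by (intro has_integral_mult_right has_integral_poly_pderiv le)
    show "poly (pderiv G) x * interpPi k a alpha w x = w (a m) * poly (pderiv G) x"
      if "x \<in> {alpha m..alpha (Suc m)} - {alpha m, alpha (Suc m)}" for x
      using that interpPi_eq[OF assms(1), of m x w] Suc.prems by auto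
  qed simp
  then show ?case
    using has_integral_combine[OF le Suc.IH] Suc.prems by simp
qed

lemma sum_mult_diff_by_parts:
  fixes w g :: "nat \<Rightarrow> real"
  shows "(\<Sum>s<Suc n. w s * (g (Suc s) - g s))
           = w n * g (Suc n) - w 0 * g 0 - (\<Sum>s=1..n. (w s - w (s - 1)) * g s)"
  by (induction n) (auto simp: algebra_simps)

lemma orth_cond_quadrature:
  fixes G :: "real poly"
  assumes dp: "dir_params k a alpha" and oc: "orth_cond k r a alpha" and deg: "degree G \<le> r + 1"
  shows "integral {-1..1} (poly G) = (\<Sum>s=1..k. (a s - a (s - 1)) * poly G (alpha s))"
proof -
  have ends: "alpha 0 = -1" "alpha (Suc k) = 1" "a 0 = -1" "a k = 1"
    using dp by (auto simp: dir_params_def)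
  define S where "S = (\<Sum>s<Suc k. a s * (poly G (alpha (Suc s)) - poly G (alpha s)))"
  have interp: "((\<lambda>x. poly (pderiv G) x * interpPi k a alpha (\<lambda>x. x) x) has_integral S) {-1..1}"
    using pderiv_mult_interpPi_has_integral[OF dp, of "Suc k" G "\<lambda>x. x"] ends by (simp add: S_def)
  have "(poly G has_integral integral {-1..1} (poly G)) {-1..1}"
    by (intro integrable_integral integrable_continuous_real continuous_on_poly continuous_on_id)
  from has_integral_diff[OF has_integral_poly_pderiv[of "-1" 1 "[:0, 1:] * G"] this]
  have by_parts: "((\<lambda>x. poly (pderiv G) x * x) has_integral
                     poly G 1 + poly G (-1) - integral {-1..1} (poly G)) {-1..1}"
    by (simp add: pderiv_mult pderiv_pCons algebra_simps)
  have "degree (pderiv G) \<le> r" and "degree [:0, 1 :: real:] \<le> 1"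
    using deg by (auto simp: degree_pderiv)
  with oc have "integral {-1..1}
      (\<lambda>x. poly (pderiv G) x * (poly [:0, 1:] x - interpPi k a alpha (poly [:0, 1:]) x)) = 0"
    unfolding orth_cond_def by blast
  moreover have "poly [:0, 1:] = (\<lambda>x::real. x)"
    by auto
  ultimately have
    "integral {-1..1} (\<lambda>x. poly (pderiv G) x * (x - interpPi k a alpha (\<lambda>x. x) x)) = 0"
    by simp
  moreover have "((\<lambda>x. poly (pderiv G) x * (x - interpPi k a alpha (\<lambda>x. x) x)) has_integral
                    poly G 1 + poly G (-1) - integral {-1..1} (poly G) - S) {-1..1}"
    using has_integral_diff[OF by_parts interp] by (simp add: algebra_simps)
  ultimately have "integral {-1..1} (poly G) = poly G 1 + poly G (-1) - S"
    by (simp add: integral_unique)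
  moreover have "S = a k * poly G (alpha (Suc k)) - a 0 * poly G (alpha 0)
                       - (\<Sum>s=1..k. (a s - a (s - 1)) * poly G (alpha s))"
    unfolding S_def by (rule sum_mult_diff_by_parts)
  ultimately show ?thesis
    using ends by simp
qed

lemma quadrature_x_times_poly_eq_0:
  fixes P :: "real poly"
  assumes dp: "dir_params k a alpha" and oc: "orth_cond k k a alpha" and "1 \<le> k"
    and deg: "degree P \<le> k"
    and roots: "\<And>m. m \<in> {1..k - 1} \<Longrightarrow> poly P (alpha m) = 0"
    and mean_zero: "integral {-1..1} (poly P) = 0"
  shows "integral {-1..1} (\<lambda>x. x * poly P x) = 0"
proof -
  have "a (k - 1) < a k"
    using dp \<open>1 \<le> k\<close> by (auto simp: dir_params_def elim!: allE[of _ "k - 1"])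
  have "{1..k} = insert k {1..k - 1}" and "k \<notin> {1..k - 1}"
    using \<open>1 \<le> k\<close> by auto
  moreover have "(\<Sum>s=1..k - 1. (a s - a (s - 1)) * poly P (alpha s)) = 0"
    by (simp add: roots)
  ultimately have "integral {-1..1} (poly P) = (a k - a (k - 1)) * poly P (alpha k)"
    using orth_cond_quadrature[OF dp oc, of P] deg by simp
  with mean_zero \<open>a (k - 1) < a k\<close> have "poly P (alpha k) = 0"
    by simp
  with roots have all_roots: "poly P (alpha s) = 0" if "s \<in> {1..k}" for s
    using that by (cases "s = k") auto
  have "degree ([:0, 1:] * P) \<le> k + 1"
    using degree_mult_le[of "[:0, 1:]" P] deg by simp
  from orth_cond_quadrature[OF dp oc this] all_roots
  have "integral {-1..1} (poly ([:0, 1:] * P)) = 0"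
    by simp
  moreover have "poly ([:0, 1:] * P) = (\<lambda>x. x * poly P x)"
    by (rule ext) simp
  ultimately show ?thesis
    by simp
qed

(* The derivative of the reference correction  sum_{s=2}^{k} bs s * Mhat s + c * Mhat (k + 1). *)
definition corr_deriv_poly :: "nat \<Rightarrow> (nat \<Rightarrow> real) \<Rightarrow> real \<Rightarrow> real poly" where
  "corr_deriv_poly k bs c =
     (\<Sum>s=2..k. smult (bs s) (legendre_poly (s - 1))) + smult c (legendre_poly k)"

lemma poly_corr_deriv_poly:
  "poly (corr_deriv_poly k bs c) x = (\<Sum>s=2..k. bs s * legendre (s - 1) x) + c * legendre k x"
  by (simp add: corr_deriv_poly_def poly_sum)

lemma degree_corr_deriv_poly: "degree (corr_deriv_poly k bs c) \<le> k"
  unfolding corr_deriv_poly_def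
proof (intro degree_add_le degree_sum_le)
  show "degree (smult (bs s) (legendre_poly (s - 1))) \<le> k" if "s \<in> {2..k}" for s
    by (rule order.trans[OF degree_smult_le order.trans[OF degree_legendre_poly]]) (use that in auto)
  show "degree (smult c (legendre_poly k)) \<le> k"
    by (rule order.trans[OF degree_smult_le degree_legendre_poly])
qed simp

lemma corr_deriv_poly_has_integral_0:
  assumes "1 \<le> k"
  shows "(poly (corr_deriv_poly k bs c) has_integral 0) {-1..1}"
proof -
  have "((\<lambda>x. (\<Sum>s=2..k. bs s * legendre (s - 1) x) + c * legendre k x) has_integral
          (\<Sum>s=2..k. bs s * 0) + c * 0) {-1..1}"
    using assms
    by (intro has_integral_add has_integral_sum has_integral_mult_right legendre_has_integral_0) auto
  then show ?thesis
    by (simp add: poly_corr_deriv_poly[abs_def])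
qed

lemma x_corr_deriv_poly_has_integral:
  assumes "2 \<le> k"
  shows "((\<lambda>x. x * poly (corr_deriv_poly k bs c) x) has_integral 2 / 3 * bs 2) {-1..1}"
proof -
  have "((\<lambda>x. (\<Sum>s=2..k. bs s * (x * legendre (s - 1) x)) + c * (x * legendre k x)) has_integral
          (\<Sum>s=2..k. if s = 2 then bs 2 * (2 / 3) else 0) + c * 0) {-1..1}"
  proof (intro has_integral_add has_integral_sum has_integral_mult_right x_legendre_has_integral_0)
    show "((\<lambda>x. bs s * (x * legendre (s - 1) x)) has_integral
            (if s = 2 then bs 2 * (2 / 3) else 0)) {-1..1}" if "s \<in> {2..k}" for s
    proof (cases "s = 2")
      case True
      then show ?thesis
        using has_integral_mult_right[OF x_legendre_1_has_integral, of "bs 2"] by simp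
    next
      case False
      with that have "2 \<le> s - 1" by auto
      with False show ?thesis
        using has_integral_mult_right[OF x_legendre_has_integral_0, of "s - 1" "bs s"] by simp
    qed
  qed (use assms in auto)
  moreover have "(\<Sum>s=2..k. if s = 2 then bs 2 * (2 / 3) else 0) = bs 2 * (2 / 3)"
    using assms by simp
  ultimately show ?thesis
    by (simp add: poly_corr_deriv_poly sum_distrib_left algebra_simps)
qed

lemma corr_sol_2_eq_0:
  assumes dp: "dir_params k a alpha" and oc: "orth_cond k k a alpha" and "2 \<le> k"
    and unique: "\<exists>!bs. corr_sys k alpha c bs"
  shows "corr_sol k alpha c 2 = 0"
proof -
  define P where "P = corr_deriv_poly k (corr_sol k alpha c) c"
  have "corr_sys k alpha c (corr_sol k alpha c)"
    unfolding corr_sol_def using theI'[OF unique] .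
  then have roots: "poly P (alpha m) = 0" if "m \<in> {1..k - 1}" for m
    using that by (simp add: corr_sys_def P_def poly_corr_deriv_poly)
  have "integral {-1..1} (poly P) = 0"
    using corr_deriv_poly_has_integral_0 \<open>2 \<le> k\<close> by (simp add: P_def integral_unique)
  moreover have "degree P \<le> k"
    by (simp add: P_def degree_corr_deriv_poly)
  ultimately have "integral {-1..1} (\<lambda>x. x * poly P x) = 0"
    using quadrature_x_times_poly_eq_0[OF dp oc _ _ roots] \<open>2 \<le> k\<close> by simp
  then show ?thesis
    using integral_unique[OF x_corr_deriv_poly_has_integral[OF \<open>2 \<le> k\<close>]] by (simp add: P_def)
qed

lemma refcoord_has_integral:
  assumes "l < r" and "(F has_integral I) {-1..1}"
  shows "((\<lambda>z. F (refcoord l r z)) has_integral (r - l) / 2 * I) {l..r}"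
proof -
  define m where "m = 2 / (r - l)"
  define c where "c = - (l + r) / (r - l)"
  have "m \<noteq> 0" and "0 \<le> 1 / m"
    using assms(1) by (auto simp: m_def)
  have image: "(\<lambda>z. (1 / m) *\<^sub>R z + - ((1 / m) *\<^sub>R c)) ` {-1..1} = {l..r}"
    using assms(1) \<open>0 \<le> 1 / m\<close> unfolding cbox_interval[symmetric] image_affinity_cbox
    by (simp add: m_def c_def field_simps)
  have scale: "(1 / \<bar>m\<bar> ^ DIM(real)) *\<^sub>R I = (r - l) / 2 * I"
    using assms(1) by (simp add: m_def)
  have "((\<lambda>z. F (m *\<^sub>R z + c)) has_integral (r - l) / 2 * I) {l..r}"
    using has_integral_affinity[OF assms(2)[folded cbox_interval] \<open>m \<noteq> 0\<close>, of c]
    unfolding cbox_interval image scale .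
  moreover have "refcoord l r z = m *\<^sub>R z + c" for z
    by (simp add: refcoord_def m_def c_def diff_divide_distrib add_divide_distrib)
  ultimately show ?thesis
    by simp
qed

lemma integral_corr_fun_eq_0:
  assumes "l < r" and "2 \<le> k" and "corr_sol k alpha c 2 = 0"
  shows "integral {l..r} (corr_fun k alpha c l r) = 0"
proof -
  have "((\<lambda>t. (\<Sum>s=2..k. corr_sol k alpha c s * Mhat s t) + c * Mhat (k + 1) t) has_integral
          (\<Sum>s=2..k. 0) + c * 0) {-1..1}"
  proof (intro has_integral_add has_integral_sum has_integral_mult_right)
    show "((\<lambda>t. corr_sol k alpha c s * Mhat s t) has_integral 0) {-1..1}" if "s \<in> {2..k}" for s
      using that assms(3) has_integral_mult_right[OF Mhat_has_integral_0, of s "corr_sol k alpha c s"]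
      by (cases "s = 2") auto
  qed (use assms(2) in \<open>auto intro: Mhat_has_integral_0\<close>)
  from refcoord_has_integral[OF assms(1) this]
  show ?thesis
    by (simp add: corr_fun_def[abs_def] integral_unique)
qed

lemma mesh_less:
  assumes "mesh N xs" and "i \<in> {1..N}"
  shows "xs (i - 1) < xs i"
  using assms by (auto simp: mesh_def elim!: allE[of _ "i - 1"])

theorem mainTheorem5:
  fixes k Nx Ny :: nat and xs ys ax ay alx aly :: "nat \<Rightarrow> real"
    and u :: "real \<Rightarrow> real \<Rightarrow> real" and i j :: nat
  assumes "k \<ge> 1"
    and "mesh Nx xs" and "mesh Ny ys"
    and "dir_params k ax alx" and "dir_params k ay aly"
    and "orth_cond k k ax alx" and "orth_cond k k ay aly"
    and "i \<in> {1..Nx}" and "j \<in> {1..Ny}"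
    and "\<forall>t\<in>{0,1}. \<exists>!bs. corr_sys k alx (Mcoef u xs ys i j (k + 1) t) bs"
    and "\<forall>s\<in>{0,1}. \<exists>!bs. corr_sys k aly (Mcoef u xs ys i j s (k + 1)) bs"
  shows "integral {xs (i - 1)..xs i} (RSx u xs ys k alx i j 0) = 0
       \<and> integral {xs (i - 1)..xs i} (RSx u xs ys k alx i j 1) = 0
       \<and> integral {ys (j - 1)..ys j} (RSy u xs ys k aly i j 0) = 0
       \<and> integral {ys (j - 1)..ys j} (RSy u xs ys k aly i j 1) = 0"
proof -
  have "k \<le> 2 * k - 2"
    using assms(6) by (simp add: orth_cond_def)
  with assms(1) have "2 \<le> k"
    by linarith
  have "integral {xs (i - 1)..xs i} (RSx u xs ys k alx i j t) = 0" if "t \<in> {0, 1}" for t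
  proof -
    from assms(10) that have "\<exists>!bs. corr_sys k alx (Mcoef u xs ys i j (k + 1) t) bs"
      by blast
    from corr_sol_2_eq_0[OF assms(4,6) \<open>2 \<le> k\<close> this]
    show ?thesis
      unfolding RSx_def[abs_def] by (rule integral_corr_fun_eq_0[OF mesh_less[OF assms(2,8)] \<open>2 \<le> k\<close>])
  qed
  moreover have "integral {ys (j - 1)..ys j} (RSy u xs ys k aly i j s) = 0" if "s \<in> {0, 1}" for s
  proof -
    from assms(11) that have "\<exists>!bs. corr_sys k aly (Mcoef u xs ys i j s (k + 1)) bs"
      by blast
    from corr_sol_2_eq_0[OF assms(5,7) \<open>2 \<le> k\<close> this]
    show ?thesis
      unfolding RSy_def[abs_def] by (rule integral_corr_fun_eq_0[OF mesh_less[OF assms(3,9)] \<open>2 \<le> k\<close>])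
  qed
  ultimately show ?thesis
    by simp
qed

end
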